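(* Let $R$ be a commutative Noetherian ring of prime characteristic $p$, let $G$ be an $x$-torsion-free left $R[x,f]$-module, and let $N$ be a special annihilator submodule of $G$. Then $G/N$ is $x$-torsion-free.
   Context: $R[x,f]$ is the Frobenius skew polynomial ring: free left $R$-module on $(x^i)_{i\ge0}$, $xr=r^px$. A left $R[x,f]$-module $M$ is $x$-torsion-free if $xm=0$ implies $m=0$. A special annihilator submodule of $G$ is one of the form $\{g:\theta g=0\ \forall\theta\in\mathfrak{B}\}$ for some graded two-sided ideal $\mathfrak{B}=\bigoplus_n\mathfrak{b}_nx^n$ of $R[x,f]$ ($(\mathfrak{b}_n)$ an ascending chain of ideals of $R$). *)

theory Defs
  imports "HOL-Algebra.Ring_Divisibility" "HOL-Algebra.Module" "HOL-Algebra.AbelCoset"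
    "HOL-Computational_Algebra.Primes"
begin

definition prime_char :: "('a, 'm) ring_scheme \<Rightarrow> nat \<Rightarrow> bool" where
  "prime_char R p \<longleftrightarrow> prime p \<and> (\<forall>n::nat. add_pow R n \<one>\<^bsub>R\<^esub> = \<zero>\<^bsub>R\<^esub> \<longleftrightarrow> p dvd n)"

text \<open>A left module over the Frobenius skew polynomial ring R[x,f] is the same as an R-module G
  together with an additive map x on G satisfying x (r g) = r^p (x g) (the relation x r = r^p x).\<close>
definition frobenius_skew_module ::
    "('a, 'c) ring_scheme \<Rightarrow> ('a, 'b) module \<Rightarrow> nat \<Rightarrow> ('b \<Rightarrow> 'b) \<Rightarrow> bool" where
  "frobenius_skew_module R G p x \<longleftrightarrow>
     module R G \<and>
     (\<forall>g\<in>carrier G. x g \<in> carrier G) \<and>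
     (\<forall>g\<in>carrier G. \<forall>h\<in>carrier G. x (g \<oplus>\<^bsub>G\<^esub> h) = x g \<oplus>\<^bsub>G\<^esub> x h) \<and>
     (\<forall>r\<in>carrier R. \<forall>g\<in>carrier G. x (r \<odot>\<^bsub>G\<^esub> g) = (r [^]\<^bsub>R\<^esub> p) \<odot>\<^bsub>G\<^esub> x g)"

definition x_torsion_free :: "('a, 'b) module \<Rightarrow> ('b \<Rightarrow> 'b) \<Rightarrow> bool" where
  "x_torsion_free G x \<longleftrightarrow> (\<forall>g\<in>carrier G. x g = \<zero>\<^bsub>G\<^esub> \<longrightarrow> g = \<zero>\<^bsub>G\<^esub>)"

text \<open>A graded two-sided ideal \<Oplus>_n b_n x^n of R[x,f], given by an ascending chain of ideals of R.\<close>
definition graded_two_sided_ideal :: "('a, 'c) ring_scheme \<Rightarrow> (nat \<Rightarrow> 'a set) \<Rightarrow> bool" where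
  "graded_two_sided_ideal R b \<longleftrightarrow> (\<forall>n. ideal (b n) R) \<and> (\<forall>n. b n \<subseteq> b (Suc n))"

text \<open>The annihilator in G of the graded ideal \<Oplus>_n b_n x^n: all g with (r x^n) g = 0 for r \<in> b_n.\<close>
definition special_ann ::
    "('a, 'b) module \<Rightarrow> ('b \<Rightarrow> 'b) \<Rightarrow> (nat \<Rightarrow> 'a set) \<Rightarrow> 'b set" where
  "special_ann G x b = {g \<in> carrier G. \<forall>n. \<forall>r\<in>b n. r \<odot>\<^bsub>G\<^esub> (x ^^ n) g = \<zero>\<^bsub>G\<^esub>}"

definition is_special_annihilator_submodule ::
    "('a, 'c) ring_scheme \<Rightarrow> ('a, 'b) module \<Rightarrow> ('b \<Rightarrow> 'b) \<Rightarrow> 'b set \<Rightarrow> bool" where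
  "is_special_annihilator_submodule R G x N \<longleftrightarrow>
     (\<exists>b. graded_two_sided_ideal R b \<and> N = special_ann G x b)"

text \<open>G/N is x-torsion-free, where x acts on G/N by x (N + g) = N + x g and the zero of G/N is N.\<close>
definition quotient_x_torsion_free :: "('a, 'b) module \<Rightarrow> ('b \<Rightarrow> 'b) \<Rightarrow> 'b set \<Rightarrow> bool" where
  "quotient_x_torsion_free G x N \<longleftrightarrow>
     (\<forall>g\<in>carrier G. N +>\<^bsub>G\<^esub> (x g) = N \<longrightarrow> N +>\<^bsub>G\<^esub> g = N)"

end

theory Submission
  imports Defs
begin

text \<open>If x g lies in the annihilator N of \<Oplus>_n b_n x^n and r \<in> b_n, then r^p \<in> b_n, so
  0 = r^p x^n (x g) = x (r x^n g); since x is injective, r x^n g = 0. Hence g \<in> N, i.e. N is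
  closed under x-division, which is x-torsion-freeness of G/N.\<close>

lemma (in ideal) pow_closed:
  assumes "a \<in> I" and "0 < n"
  shows "a [^] (n::nat) \<in> I"
proof -
  obtain k where "n = Suc k" using \<open>0 < n\<close> by (cases n) auto
  moreover have "a [^] k \<otimes> a \<in> I"
    using assms(1) a_subset by (blast intro: I_l_closed)
  ultimately show ?thesis by simp
qed

lemma funpow_hom_closed:
  assumes "f \<in> hom M M"
  shows "f ^^ n \<in> hom M M"
  by (induction n) (use assms in \<open>auto simp: hom_def Pi_def\<close>)

lemma (in abelian_group) a_rcos_eq_self_iff:
  assumes "subgroup H (add_monoid G)" and "g \<in> carrier G"
  shows "H +> g = H \<longleftrightarrow> g \<in> H"
proof -
  interpret abelian_subgroup H G
    using assms(1) by (intro abelian_subgroupI3 additive_subgroupI abelian_group_axioms)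
  show ?thesis using a_rcos_self[OF assms(2)] a_rcos_const by blast
qed

lemma frobenius_skew_module_add_hom:
  assumes "frobenius_skew_module R G p x"
  shows "x \<in> hom (add_monoid G) (add_monoid G)"
  using assms by (auto simp: frobenius_skew_module_def hom_def)

lemma special_ann_subgroup:
  assumes "module R G" and "x \<in> hom (add_monoid G) (add_monoid G)"
    and "\<And>n. b n \<subseteq> carrier R"
  shows "subgroup (special_ann G x b) (add_monoid G)"
proof -
  interpret module R G by fact
  interpret xn: group_hom "add_monoid G" "add_monoid G" "x ^^ n" for n
    using funpow_hom_closed[OF assms(2)] by (simp add: group_hom_def group_hom_axioms_def)
  have xn_uminus: "(x ^^ n) (\<ominus>\<^bsub>G\<^esub> g) = \<ominus>\<^bsub>G\<^esub> (x ^^ n) g" if "g \<in> carrier G" for n g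
    using xn.hom_inv[of g] that by (simp add: a_inv_def)
  have r: "r \<in> carrier R" if "r \<in> b n" for r n
    using assms(3) that by blast
  show ?thesis
  proof (rule add.subgroupI)
    show "special_ann G x b \<subseteq> carrier G" "special_ann G x b \<noteq> {}"
      using xn.hom_one r by (auto simp: special_ann_def)
    show "\<ominus>\<^bsub>G\<^esub> g \<in> special_ann G x b" if "g \<in> special_ann G x b" for g
      using that xn_uminus r xn.hom_closed by (auto simp: special_ann_def smult_r_minus)
    show "g \<oplus>\<^bsub>G\<^esub> h \<in> special_ann G x b"
      if "g \<in> special_ann G x b" "h \<in> special_ann G x b" for g h
      using that xn.hom_mult r xn.hom_closed by (auto simp: special_ann_def smult_r_distr)
  qed
qed

lemma special_ann_x_divisible:
  assumes skew: "frobenius_skew_module R G p x" and tf: "x_torsion_free G x"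
    and "0 < p" and ideals: "\<And>n. ideal (b n) R"
    and g: "g \<in> carrier G" and xg: "x g \<in> special_ann G x b"
  shows "g \<in> special_ann G x b"
  unfolding special_ann_def
proof (intro CollectI conjI allI ballI g)
  fix n r assume r_b: "r \<in> b n"
  have G: "module R G"
    and x_smult: "\<And>s h. s \<in> carrier R \<Longrightarrow> h \<in> carrier G \<Longrightarrow>
                     x (s \<odot>\<^bsub>G\<^esub> h) = (s [^]\<^bsub>R\<^esub> p) \<odot>\<^bsub>G\<^esub> x h"
    using skew by (auto simp: frobenius_skew_module_def)
  have r: "r \<in> carrier R"
    using ideal.axioms(1)[OF ideals] r_b by (auto dest: additive_subgroup.a_subset)
  have xn_g: "(x ^^ n) g \<in> carrier G"
    using funpow_hom_closed[OF frobenius_skew_module_add_hom[OF skew]] g by (auto simp: hom_def)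
  have "r [^]\<^bsub>R\<^esub> p \<in> b n"
    using ideal.pow_closed[OF ideals r_b \<open>0 < p\<close>] .
  then have "(r [^]\<^bsub>R\<^esub> p) \<odot>\<^bsub>G\<^esub> (x ^^ n) (x g) = \<zero>\<^bsub>G\<^esub>"
    using xg by (auto simp: special_ann_def)
  then have "x (r \<odot>\<^bsub>G\<^esub> (x ^^ n) g) = \<zero>\<^bsub>G\<^esub>"
    using x_smult[OF r xn_g] by (simp add: funpow_swap1)
  moreover have "r \<odot>\<^bsub>G\<^esub> (x ^^ n) g \<in> carrier G"
    using module.smult_closed[OF G r xn_g] .
  ultimately show "r \<odot>\<^bsub>G\<^esub> (x ^^ n) g = \<zero>\<^bsub>G\<^esub>"
    using tf by (simp add: x_torsion_free_def)
qed

theorem lemma3p1: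
  fixes R :: "('a, 'c) ring_scheme" and G :: "('a, 'b) module"
    and p :: nat and x :: "'b \<Rightarrow> 'b" and N :: "'b set"
  assumes "cring R" and "noetherian_ring R" and "prime_char R p"
    and "frobenius_skew_module R G p x"
    and "x_torsion_free G x"
    and "is_special_annihilator_submodule R G x N"
  shows "quotient_x_torsion_free G x N"
proof -
  obtain b where b: "graded_two_sided_ideal R b" and N: "N = special_ann G x b"
    using assms(6) by (auto simp: is_special_annihilator_submodule_def)
  have ideals: "\<And>n. ideal (b n) R"
    using b by (simp add: graded_two_sided_ideal_def)
  have "0 < p"
    using assms(3) by (simp add: prime_char_def prime_gt_0_nat)
  have G: "module R G" and x_closed: "\<And>g. g \<in> carrier G \<Longrightarrow> x g \<in> carrier G"
    using assms(4) by (auto simp: frobenius_skew_module_def)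
  have b_carrier: "\<And>n. b n \<subseteq> carrier R"
    using ideals by (simp add: ideal_def additive_subgroup.a_subset)
  interpret module R G by (rule G)
  have N_subgroup: "subgroup N (add_monoid G)"
    unfolding N by (rule special_ann_subgroup[OF G frobenius_skew_module_add_hom[OF assms(4)] b_carrier])
  show ?thesis
    unfolding quotient_x_torsion_free_def
  proof (intro ballI impI)
    fix g assume g: "g \<in> carrier G" and "N +>\<^bsub>G\<^esub> x g = N"
    then have "x g \<in> N"
      using a_rcos_eq_self_iff[OF N_subgroup x_closed] by blast
    then have "g \<in> N"
      unfolding N by (rule special_ann_x_divisible[where b = b, OF assms(4,5) \<open>0 < p\<close> ideals g])
    then show "N +>\<^bsub>G\<^esub> g = N"
      using a_rcos_eq_self_iff[OF N_subgroup g] by blast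
  qed
qed

end
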